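(* For each $k\ge 3$, let $\mathcal S(\eta,k)$ be the $k$-uniform hyperstar consisting of $\eta$ edges pairwise meeting only in a common center vertex $1$. Let $y^{(\eta)}$ be the principal eigenvector of $\mathcal S(\eta,k)$ and $x^{(\eta)}$ the principal eigenvector of its clique-shadow (the windmill graph of $\eta$ copies of $K_k$ sharing vertex $1$). Then $(y^{(\eta)}_1)^k=1/k$ for every $\eta$, and $(x^{(\eta)}_1)^2\to 1/2$ as $\eta\to\infty$. Consequently $\Delta_k\ge \tfrac12-\tfrac1k$, where $\Delta_k=\sup_H\max_v|y_v^k-x_v^2|$ over all connected $k$-uniform hypergraphs $H$ (with $y,x$ the principal eigenvectors of $H$ and $\partial^*H$).
   Context: For a connected $k$-uniform hypergraph $H=([n],E)$, writing $x^e=\prod_{v\in e}x_v$, its principal eigenvector is the unique strictly positive $y$ with $\|y\|_k=1$ and $\rho\, y_i^{k-1}=\sum_{e\ni i}y^{e\setminus\{i\}}$ for all $i$, where $\rho=\max_{\|z\|_k^k=1}k\sum_{e\in E}z^e$. The clique-shadow $\partial^*H$ is the multigraph on $[n]$ in which $\{u,v\}$ has multiplicity $\mu(uv)=|\{e\in E:u,v\in e\}|$; its principal eigenvector is the positive Perron eigenvector of its adjacency matrix (entries $\mu(uv)$), normalized to unit $2$-norm. *)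

theory Defs
  imports Complex_Main
begin

definition kuniform :: "nat \<Rightarrow> nat \<Rightarrow> nat set set \<Rightarrow> bool" where
  "kuniform n k E \<longleftrightarrow> finite E \<and> (\<forall>e\<in>E. e \<subseteq> {1..n} \<and> card e = k)"

definition hconnected :: "nat \<Rightarrow> nat set set \<Rightarrow> bool" where
  "hconnected n E \<longleftrightarrow> n \<ge> 1 \<and>
     (\<forall>u\<in>{1..n}. \<forall>v\<in>{1..n}. (u, v) \<in> {(a, b). \<exists>e\<in>E. a \<in> e \<and> b \<in> e}\<^sup>*)"

definition hrho :: "nat \<Rightarrow> nat \<Rightarrow> nat set set \<Rightarrow> real" where
  "hrho n k E = Sup {real k * (\<Sum>e\<in>E. \<Prod>v\<in>e. z v) | z :: nat \<Rightarrow> real.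
                      (\<Sum>i\<in>{1..n}. \<bar>z i\<bar> ^ k) = 1}"

definition hpev :: "nat \<Rightarrow> nat \<Rightarrow> nat set set \<Rightarrow> nat \<Rightarrow> real" where
  "hpev n k E = (THE y. (\<forall>i\<in>{1..n}. y i > 0) \<and> (\<forall>i. i \<notin> {1..n} \<longrightarrow> y i = 0)
      \<and> (\<Sum>i\<in>{1..n}. y i ^ k) = 1
      \<and> (\<forall>i\<in>{1..n}. hrho n k E * y i ^ (k - 1) = (\<Sum>e\<in>{e\<in>E. i \<in> e}. \<Prod>v\<in>e - {i}. y v)))"

text \<open>multiplicity of pair {u,v} in the clique-shadow (no loops)\<close>
definition mu :: "nat set set \<Rightarrow> nat \<Rightarrow> nat \<Rightarrow> real" where
  "mu E u v = (if u = v then 0 else real (card {e\<in>E. u \<in> e \<and> v \<in> e}))"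

definition shadow_lambda :: "nat \<Rightarrow> nat set set \<Rightarrow> real" where
  "shadow_lambda n E = Sup {(\<Sum>i\<in>{1..n}. \<Sum>j\<in>{1..n}. mu E i j * x i * x j) | x :: nat \<Rightarrow> real.
                             (\<Sum>i\<in>{1..n}. x i ^ 2) = 1}"

definition spev :: "nat \<Rightarrow> nat set set \<Rightarrow> nat \<Rightarrow> real" where
  "spev n E = (THE x. (\<forall>i\<in>{1..n}. x i > 0) \<and> (\<forall>i. i \<notin> {1..n} \<longrightarrow> x i = 0)
      \<and> (\<Sum>i\<in>{1..n}. x i ^ 2) = 1
      \<and> (\<forall>i\<in>{1..n}. (\<Sum>j\<in>{1..n}. mu E i j * x j) = shadow_lambda n E * x i))"

definition star_n :: "nat \<Rightarrow> nat \<Rightarrow> nat" where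
  "star_n eta k = 1 + eta * (k - 1)"

definition star_edges :: "nat \<Rightarrow> nat \<Rightarrow> nat set set" where
  "star_edges eta k = (\<lambda>j. insert 1 {2 + (j - 1) * (k - 1) .. 1 + j * (k - 1)}) ` {1..eta}"

definition Delta :: "nat \<Rightarrow> real" where
  "Delta k = Sup ((\<lambda>(n, E). Max ((\<lambda>v. \<bar>hpev n k E v ^ k - spev n E v ^ 2\<bar>) ` {1..n}))
                   ` {(n, E). kuniform n k E \<and> hconnected n E})"

end

theory Submission
  imports Defs "HOL-Analysis.Analysis"
begin

text \<open>A \<open>k\<close>-uniform hypergraph and its clique-shadow are both uniform hypergraphs with nonnegative
  edge weights (the shadow a 2-uniform one). For such a connected hypergraph, a maximiser of the
  multilinear form on the nonnegative part of the unit \<open>k\<close>-sphere is strictly positive and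
  satisfies the eigenequations; conversely AM-GM shows that a positive solution with eigenvalue
  \<open>lam\<close> forces \<open>lam = rho\<close>, and a maximal-ratio argument shows that it is unique. So the
  principal eigenvector is identified by exhibiting any positive solution.

  On the hyperstar the symmetric guess (one value at the center, one on the leaves) solves the
  eigenequations with \<open>y\<^sub>1 ^ k = 1 / k\<close>; on its shadow, the windmill, it gives
  \<open>x\<^sub>1 ^ 2 = 1/2 - (k - 2) / (2 * sqrt ((k - 2)\<^sup>2 + 4 * eta * (k - 1)))\<close>, which tends to \<open>1/2\<close>.
  Since all entries of normalised eigenvectors lie in \<open>[0, 1]\<close>, \<open>Delta k\<close> is the supremum of a
  bounded set and hence at least \<open>1/2 - 1/k\<close>.\<close>

section \<open>Uniform hypergraphs with nonnegative weights\<close>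

lemma prod_le_mean_power:
  fixes r :: "'a \<Rightarrow> real"
  assumes A: "finite A" "A \<noteq> {}" and r: "\<And>v. v \<in> A \<Longrightarrow> r v \<ge> 0"
  shows "(\<Prod>v\<in>A. r v) \<le> (\<Sum>v\<in>A. r v ^ card A) / card A"
proof -
  let ?k = "card A"
  have k: "?k > 0" using A by (simp add: card_gt_0_iff)
  have p: "(\<Prod>v\<in>A. r v) \<ge> 0" by (simp add: prod_nonneg r)
  have "(\<Prod>v\<in>A. r v ^ ?k) powr (1 / ?k) \<le> (\<Sum>v\<in>A. r v ^ ?k / ?k)"
    by (rule arith_geom_mean[OF A]) (simp add: r)
  moreover have "(\<Prod>v\<in>A. r v ^ ?k) powr (1 / ?k) = ((\<Prod>v\<in>A. r v) powr ?k) powr (1 / ?k)"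
    using p k by (simp add: prod_power_distrib powr_realpow')
  moreover have "\<dots> = (\<Prod>v\<in>A. r v)"
    using p k by (simp add: powr_powr)
  ultimately show ?thesis by (simp add: sum_divide_distrib)
qed

locale uniform_weighted_hypergraph =
  fixes V :: "nat set" and E :: "'e set" and vs :: "'e \<Rightarrow> nat set" and w :: "'e \<Rightarrow> real"
    and k :: nat
  assumes finite_V: "finite V" and finite_E: "finite E" and edge_subset: "\<And>e. e \<in> E \<Longrightarrow> vs e \<subseteq> V"
    and card_edge: "\<And>e. e \<in> E \<Longrightarrow> card (vs e) = k" and weight_nonneg: "\<And>e. e \<in> E \<Longrightarrow> w e \<ge> 0"
    and k_ge_2: "k \<ge> 2"
begin

definition form :: "(nat \<Rightarrow> real) \<Rightarrow> real" where
  "form z = (\<Sum>e\<in>E. w e * (\<Prod>v\<in>vs e. z v))"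

definition grad :: "nat \<Rightarrow> (nat \<Rightarrow> real) \<Rightarrow> real" where
  "grad i z = (\<Sum>e\<in>{e\<in>E. i \<in> vs e}. w e * (\<Prod>v\<in>vs e - {i}. z v))"

definition knorm :: "(nat \<Rightarrow> real) \<Rightarrow> real" where
  "knorm z = (\<Sum>i\<in>V. \<bar>z i\<bar> ^ k)"

definition rho :: real where
  "rho = Sup {real k * form z | z. knorm z = 1}"

definition eigenpair :: "real \<Rightarrow> (nat \<Rightarrow> real) \<Rightarrow> bool" where
  "eigenpair lam y \<longleftrightarrow> (\<forall>i\<in>V. y i > 0) \<and> (\<forall>i. i \<notin> V \<longrightarrow> y i = 0) \<and> (\<Sum>i\<in>V. y i ^ k) = 1
     \<and> (\<forall>i\<in>V. lam * y i ^ (k - 1) = grad i y)"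

definition connected :: bool where
  "connected \<longleftrightarrow>
     (\<forall>u\<in>V. \<forall>v\<in>V. (u, v) \<in> {(a, b). \<exists>e\<in>E. w e > 0 \<and> a \<in> vs e \<and> b \<in> vs e}\<^sup>*)"

lemma finite_edge: "e \<in> E \<Longrightarrow> finite (vs e)"
  using edge_subset finite_V finite_subset by blast

lemma power_k_eq: "(x::real) * x ^ (k - 1) = x ^ k"
proof -
  have "Suc (k - 1) = k" using k_ge_2 by simp
  then show ?thesis by (metis power_Suc)
qed

lemma prod_remove_vertex: "e \<in> E \<Longrightarrow> i \<in> vs e \<Longrightarrow> (\<Prod>v\<in>vs e. z v) = z i * (\<Prod>v\<in>vs e - {i}. z v)"
  using finite_edge by (intro prod.remove)

lemma sum_edges_vertices:
  "(\<Sum>e\<in>E. \<Sum>v\<in>vs e. h e v) = (\<Sum>v\<in>V. \<Sum>e\<in>{e\<in>E. v \<in> vs e}. h e v)"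
proof -
  have "(\<Sum>e\<in>E. \<Sum>v\<in>vs e. h e v) = (\<Sum>e\<in>E. \<Sum>v\<in>{v. v \<in> V \<and> v \<in> vs e}. h e v)"
    by (intro sum.cong refl) (use edge_subset in auto)
  also have "\<dots> = (\<Sum>v\<in>V. \<Sum>e\<in>{e. e \<in> E \<and> v \<in> vs e}. h e v)"
    by (rule sum.swap_restrict[OF finite_E finite_V])
  finally show ?thesis by simp
qed

lemma euler_identity: "(\<Sum>i\<in>V. z i * grad i z) = real k * form z"
proof -
  have "(\<Sum>i\<in>V. z i * grad i z) = (\<Sum>i\<in>V. \<Sum>e\<in>{e\<in>E. i \<in> vs e}. w e * (\<Prod>v\<in>vs e. z v))"
    unfolding grad_def sum_distrib_left by (intro sum.cong refl) (auto simp: prod_remove_vertex)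
  also have "\<dots> = (\<Sum>e\<in>E. \<Sum>i\<in>vs e. w e * (\<Prod>v\<in>vs e. z v))"
    by (rule sum_edges_vertices[symmetric])
  also have "\<dots> = real k * form z"
    unfolding form_def sum_distrib_left by (intro sum.cong refl) (simp add: card_edge)
  finally show ?thesis .
qed

lemma form_le_form_abs: "form z \<le> form (\<lambda>v. \<bar>z v\<bar>)"
  unfolding form_def
proof (intro sum_mono)
  fix e assume e: "e \<in> E"
  have "w e * (\<Prod>v\<in>vs e. z v) \<le> \<bar>w e * (\<Prod>v\<in>vs e. z v)\<bar>" by simp
  also have "\<dots> = w e * (\<Prod>v\<in>vs e. \<bar>z v\<bar>)" using weight_nonneg[OF e] by (simp add: abs_mult abs_prod)
  finally show "w e * (\<Prod>v\<in>vs e. z v) \<le> w e * (\<Prod>v\<in>vs e. \<bar>z v\<bar>)" .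
qed

text \<open>Writing \<open>\<bar>z v\<bar> = y v * r v\<close>, AM-GM on each edge bounds the form by a sum which the
  eigenequations of \<open>y\<close> collapse to \<open>lam * knorm z\<close>.\<close>
lemma form_le_eigenvalue_knorm:
  assumes y: "eigenpair lam y"
  shows "real k * form z \<le> lam * knorm z"
proof -
  have ypos: "\<And>v. v \<in> V \<Longrightarrow> y v > 0" using y unfolding eigenpair_def by auto
  define r where "r v = \<bar>z v\<bar> / y v" for v
  have r_nonneg: "r v \<ge> 0" for v
    unfolding r_def by (cases "v \<in> V") (use y ypos in \<open>auto simp: eigenpair_def intro!: divide_nonneg_pos\<close>)
  have z_eq: "\<bar>z v\<bar> = y v * r v" if "v \<in> V" for v using ypos[OF that] unfolding r_def by simp
  have edge_bound: "real k * (w e * (\<Prod>u\<in>vs e. \<bar>z u\<bar>))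
      \<le> (\<Sum>v\<in>vs e. w e * (\<Prod>u\<in>vs e. y u) * r v ^ k)" if e: "e \<in> E" for e
  proof -
    have abs_prod: "(\<Prod>u\<in>vs e. \<bar>z u\<bar>) = (\<Prod>u\<in>vs e. y u) * (\<Prod>u\<in>vs e. r u)"
      using edge_subset[OF e] z_eq by (simp add: prod.distrib[symmetric] subset_iff)
    have amgm: "real k * (\<Prod>u\<in>vs e. r u) \<le> (\<Sum>u\<in>vs e. r u ^ k)"
    proof -
      have "vs e \<noteq> {}" using card_edge[OF e] k_ge_2 by auto
      from prod_le_mean_power[OF finite_edge[OF e] this, of r]
      show ?thesis using r_nonneg card_edge[OF e] k_ge_2 by (simp add: field_simps)
    qed
    have "0 \<le> w e * (\<Prod>u\<in>vs e. y u)" using weight_nonneg[OF e] edge_subset[OF e] ypos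
      by (intro mult_nonneg_nonneg prod_nonneg) (auto intro: less_imp_le)
    from mult_left_mono[OF amgm this]
    have "real k * (w e * (\<Prod>u\<in>vs e. \<bar>z u\<bar>))
        \<le> (w e * (\<Prod>u\<in>vs e. y u)) * (\<Sum>u\<in>vs e. r u ^ k)"
      unfolding abs_prod by (simp add: algebra_simps)
    then show ?thesis by (simp add: sum_distrib_left)
  qed
  have "real k * form z \<le> real k * form (\<lambda>v. \<bar>z v\<bar>)"
    using form_le_form_abs[of z] by (intro mult_left_mono) auto
  also have "\<dots> \<le> (\<Sum>e\<in>E. \<Sum>v\<in>vs e. w e * (\<Prod>u\<in>vs e. y u) * r v ^ k)"
    unfolding form_def sum_distrib_left by (intro sum_mono edge_bound)
  also have "\<dots> = (\<Sum>v\<in>V. \<Sum>e\<in>{e\<in>E. v \<in> vs e}. w e * (\<Prod>u\<in>vs e. y u) * r v ^ k)"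
    by (rule sum_edges_vertices)
  also have "\<dots> = (\<Sum>v\<in>V. r v ^ k * y v * grad v y)"
    unfolding grad_def sum_distrib_left by (intro sum.cong refl) (auto simp: prod_remove_vertex)
  also have "\<dots> = (\<Sum>v\<in>V. lam * (y v * r v) ^ k)"
  proof (intro sum.cong refl)
    fix v assume "v \<in> V"
    then have "grad v y = lam * y v ^ (k - 1)" using y unfolding eigenpair_def by auto
    then show "r v ^ k * y v * grad v y = lam * (y v * r v) ^ k"
      using power_k_eq[of "y v"] by (simp add: power_mult_distrib algebra_simps)
  qed
  also have "\<dots> = lam * knorm z" unfolding knorm_def sum_distrib_left using z_eq by simp
  finally show ?thesis .
qed

lemma eigenpair_knorm: "eigenpair lam y \<Longrightarrow> knorm y = 1"
  unfolding eigenpair_def knorm_def by (auto intro!: sum.cong simp: less_imp_le)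

lemma eigenpair_form:
  assumes "eigenpair lam y"
  shows "real k * form y = lam"
proof -
  have "real k * form y = (\<Sum>i\<in>V. y i * grad i y)" by (simp add: euler_identity)
  also have "\<dots> = (\<Sum>i\<in>V. lam * y i ^ k)"
    using assms power_k_eq unfolding eigenpair_def by (intro sum.cong refl) (metis mult.left_commute)
  also have "\<dots> = lam" using assms unfolding eigenpair_def by (simp add: sum_distrib_left[symmetric])
  finally show ?thesis .
qed

lemma rho_eq_eigenvalue:
  assumes "eigenpair lam y"
  shows "rho = lam"
  unfolding rho_def
proof (rule cSup_eq_maximum)
  show "lam \<in> {real k * form z | z. knorm z = 1}"
    using eigenpair_form[OF assms] eigenpair_knorm[OF assms] by auto
  show "x \<le> lam" if x: "x \<in> {real k * form z | z. knorm z = 1}" for x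
  proof -
    obtain z where "x = real k * form z" "knorm z = 1" using x by auto
    then show ?thesis using form_le_eigenvalue_knorm[OF assms, of z] by simp
  qed
qed

lemma connected_closed_subset:
  assumes connected and a: "a \<in> V" "a \<in> M"
    and closed: "\<And>e i v. e \<in> E \<Longrightarrow> w e > 0 \<Longrightarrow> i \<in> vs e \<Longrightarrow> v \<in> vs e \<Longrightarrow> i \<in> M \<Longrightarrow> v \<in> M"
  shows "V \<subseteq> M"
proof
  fix b assume "b \<in> V"
  then have "(a, b) \<in> {(a, b). \<exists>e\<in>E. w e > 0 \<and> a \<in> vs e \<and> b \<in> vs e}\<^sup>*"
    using \<open>connected\<close> a unfolding connected_def by blast
  then show "b \<in> M"
    by (induction rule: rtrancl_induct) (use a closed in blast)+
qed

text \<open>If \<open>y' \<le> t y\<close> with equality at \<open>i\<close>, the eigenequation at \<open>i\<close> forces equality on every edge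
  through \<open>i\<close>: a strict inequality there would make \<open>grad i y'\<close> strictly smaller.\<close>
lemma eigenpair_ratio_propagates:
  assumes y: "eigenpair lam y" and y': "eigenpair lam y'"
    and le: "\<And>u. u \<in> V \<Longrightarrow> y' u \<le> t * y u" and t: "t > 0"
    and e: "e \<in> E" "w e > 0" "i \<in> vs e" "v \<in> vs e" and eq: "y' i = t * y i"
  shows "y' v = t * y v"
proof (rule ccontr)
  assume neq: "y' v \<noteq> t * y v"
  have ypos: "\<And>u. u \<in> V \<Longrightarrow> y u > 0" and y'pos: "\<And>u. u \<in> V \<Longrightarrow> y' u > 0"
    using y y' unfolding eigenpair_def by auto
  have iV: "i \<in> V" and vV: "v \<in> V" using edge_subset[OF e(1)] e by auto
  have lt: "y' v < t * y v" using neq le[OF vV] by simp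
  have "v \<noteq> i" using neq eq by auto
  have term_le: "w x * (\<Prod>u\<in>vs x - {i}. y' u) \<le> w x * (\<Prod>u\<in>vs x - {i}. t * y u)" if x: "x \<in> E" for x
  proof (intro mult_left_mono prod_mono conjI)
    fix u assume "u \<in> vs x - {i}"
    then have "u \<in> V" using edge_subset[OF x] by auto
    then show "0 \<le> y' u" "y' u \<le> t * y u" using le y'pos less_imp_le by auto
  qed (use weight_nonneg[OF x] in simp)
  have "(\<Prod>u\<in>vs e - {i}. y' u) < (\<Prod>u\<in>vs e - {i}. t * y u)"
  proof (rule prod_mono_strict[of v])
    show "v \<in> vs e - {i}" using e \<open>v \<noteq> i\<close> by auto
    show "finite (vs e - {i})" using finite_edge[OF e(1)] by simp
  qed (use lt edge_subset[OF e(1)] le y'pos ypos t in \<open>auto intro: less_imp_le\<close>)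
  then have "grad i y' < (\<Sum>x\<in>{x\<in>E. i \<in> vs x}. w x * (\<Prod>u\<in>vs x - {i}. t * y u))"
    unfolding grad_def using e finite_E term_le
    by (intro sum_strict_mono_ex1) (auto intro!: bexI[of _ e])
  also have "\<dots> = t ^ (k - 1) * grad i y"
    unfolding grad_def sum_distrib_left
  proof (intro sum.cong refl)
    fix x assume "x \<in> {x\<in>E. i \<in> vs x}"
    then have "card (vs x - {i}) = k - 1" using card_edge finite_edge by auto
    then show "w x * (\<Prod>u\<in>vs x - {i}. t * y u) = t ^ (k - 1) * (w x * (\<Prod>u\<in>vs x - {i}. y u))"
      by (simp add: prod.distrib)
  qed
  also have "\<dots> = lam * (t * y i) ^ (k - 1)"
    using y iV unfolding eigenpair_def by (simp add: power_mult_distrib)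
  also have "\<dots> = grad i y'" using y' iV eq unfolding eigenpair_def by auto
  finally show False by simp
qed

text \<open>Scale \<open>y\<close> by the largest ratio \<open>t = max (y' / y)\<close>; the set where \<open>y' = t y\<close> is then closed
  along edges, hence all of \<open>V\<close>, and the normalisation gives \<open>t = 1\<close>.\<close>
lemma eigenpair_unique:
  assumes connected and y: "eigenpair lam y" and y': "eigenpair lam y'"
  shows "y' = y"
proof -
  have ypos: "\<And>v. v \<in> V \<Longrightarrow> y v > 0" and y'pos: "\<And>v. v \<in> V \<Longrightarrow> y' v > 0"
    using y y' unfolding eigenpair_def by auto
  have "V \<noteq> {}" using y unfolding eigenpair_def by auto
  define t where "t = Max ((\<lambda>i. y' i / y i) ` V)"
  have "t \<in> (\<lambda>i. y' i / y i) ` V"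
    unfolding t_def using finite_V \<open>V \<noteq> {}\<close> by (intro Max_in) auto
  then obtain i0 where i0: "i0 \<in> V" "t = y' i0 / y i0" by auto
  have t: "t > 0" using i0 ypos y'pos by simp
  have le: "y' i \<le> t * y i" if "i \<in> V" for i
  proof -
    have "y' i / y i \<le> t" unfolding t_def using finite_V that by (intro Max_ge) auto
    then show ?thesis using ypos[OF that] by (simp add: divide_le_eq mult.commute)
  qed
  have "V \<subseteq> {i. y' i = t * y i}"
  proof (rule connected_closed_subset[OF \<open>connected\<close> i0(1)])
    show "i0 \<in> {i. y' i = t * y i}" using i0 ypos[OF i0(1)] by simp
  qed (use eigenpair_ratio_propagates[OF y y' le t] in blast)
  then have scaled: "\<And>u. u \<in> V \<Longrightarrow> y' u = t * y u" by blast
  have "t ^ k = (\<Sum>i\<in>V. t ^ k * y i ^ k)" using y unfolding eigenpair_def by (simp add: sum_distrib_left[symmetric])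
  also have "\<dots> = (\<Sum>i\<in>V. y' i ^ k)" using scaled by (simp add: power_mult_distrib)
  also have "\<dots> = 1" using y' unfolding eigenpair_def by simp
  finally have "t ^ k = 1 ^ k" by simp
  then have "t = 1" using t k_ge_2 by (subst (asm) power_eq_iff_eq_base) auto
  show ?thesis
  proof
    fix u show "y' u = y u"
      using scaled \<open>t = 1\<close> y y' unfolding eigenpair_def by (cases "u \<in> V") auto
  qed
qed

lemma continuous_on_form: "continuous_on UNIV form"
  unfolding form_def by (intro continuous_intros continuous_on_product_coordinates)

lemma continuous_on_knorm: "continuous_on UNIV knorm"
  unfolding knorm_def
  by (intro continuous_on_sum continuous_on_power continuous_on_rabs continuous_on_product_coordinates)

lemma form_scale: "form (\<lambda>v. c * z v) = c ^ k * form z"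
  unfolding form_def sum_distrib_left by (intro sum.cong refl) (simp add: prod.distrib card_edge)

lemma knorm_scale: "knorm (\<lambda>v. c * z v) = \<bar>c\<bar> ^ k * knorm z"
  unfolding knorm_def by (simp add: sum_distrib_left abs_mult power_mult_distrib)

lemma knorm_nonneg: "knorm z \<ge> 0"
  unfolding knorm_def by (simp add: sum_nonneg)

lemma form_nonneg: "(\<And>v. v \<in> V \<Longrightarrow> z v \<ge> 0) \<Longrightarrow> form z \<ge> 0"
  unfolding form_def using edge_subset weight_nonneg
  by (intro sum_nonneg mult_nonneg_nonneg prod_nonneg) (auto simp: subset_iff)

lemma abs_le_knorm: "i \<in> V \<Longrightarrow> \<bar>z i\<bar> ^ k \<le> knorm z"
  unfolding knorm_def using finite_V by (intro member_le_sum) auto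

lemma form_eq_0_if_knorm_eq_0:
  assumes "knorm z = 0"
  shows "form z = 0"
proof -
  have z0: "z i = 0" if "i \<in> V" for i
    using abs_le_knorm[OF that, of z] assms k_ge_2 by (auto simp add: power_le_zero_eq)
  show ?thesis unfolding form_def
  proof (intro sum.neutral ballI)
    fix e assume e: "e \<in> E"
    then obtain v where "v \<in> vs e" using card_edge[OF e] k_ge_2 by fastforce
    then have "(\<Prod>v\<in>vs e. z v) = 0" using z0 edge_subset[OF e] finite_edge[OF e] by (intro prod_zero) auto
    then show "w e * (\<Prod>v\<in>vs e. z v) = 0" by simp
  qed
qed

definition nonneg_sphere :: "(nat \<Rightarrow> real) set" where
  "nonneg_sphere = (PiE UNIV (\<lambda>i. if i \<in> V then {0..1} else {0})) \<inter> {z. knorm z = 1}"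

lemma mem_nonneg_sphere_iff:
  "z \<in> nonneg_sphere \<longleftrightarrow> (\<forall>i\<in>V. 0 \<le> z i \<and> z i \<le> 1) \<and> (\<forall>i. i \<notin> V \<longrightarrow> z i = 0) \<and> knorm z = 1"
  unfolding nonneg_sphere_def PiE_iff by (auto split: if_splits)

lemma compact_nonneg_sphere: "compact nonneg_sphere"
proof -
  have "compactin (product_topology (\<lambda>i. euclidean) UNIV)
      (PiE UNIV (\<lambda>i. if i \<in> V then {0..1::real} else {0}))"
    by (subst compactin_PiE) auto
  then have "compact (PiE UNIV (\<lambda>i. if i \<in> V then {0..1::real} else {0}))"
    by (simp add: euclidean_product_topology)
  moreover have "closed {z. knorm z = 1}"
    by (intro closed_Collect_eq continuous_on_knorm continuous_on_const)
  ultimately show ?thesis unfolding nonneg_sphere_def by (rule compact_Int_closed)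
qed

lemma form_max_on_nonneg_sphere:
  assumes "V \<noteq> {}"
  obtains z0 where "z0 \<in> nonneg_sphere" "\<And>z. knorm z = 1 \<Longrightarrow> form z \<le> form z0"
proof -
  obtain v where v: "v \<in> V" using assms by auto
  have "(\<lambda>i. if i = v then 1 else 0) \<in> nonneg_sphere"
  proof -
    have "(\<Sum>i\<in>V. \<bar>if i = v then 1 else 0 :: real\<bar> ^ k) = (\<Sum>i\<in>V. if i = v then 1 else 0)"
      using k_ge_2 by (intro sum.cong) auto
    then show ?thesis unfolding mem_nonneg_sphere_iff knorm_def using v finite_V by simp
  qed
  then have "nonneg_sphere \<noteq> {}" by auto
  then obtain z0 where z0: "z0 \<in> nonneg_sphere" "\<And>z. z \<in> nonneg_sphere \<Longrightarrow> form z \<le> form z0"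
    using continuous_attains_sup[OF compact_nonneg_sphere _ continuous_on_subset[OF continuous_on_form]]
    by auto
  have "form z \<le> form z0" if z: "knorm z = 1" for z
  proof -
    define z' where "z' i = (if i \<in> V then \<bar>z i\<bar> else 0)" for i
    have "form (\<lambda>v. \<bar>z v\<bar>) = form z'" unfolding form_def z'_def
      by (intro sum.cong refl arg_cong2[where f="(*)"] prod.cong) (use edge_subset in auto)
    moreover have "z' \<in> nonneg_sphere"
      unfolding mem_nonneg_sphere_iff
    proof (intro conjI ballI allI impI)
      show "knorm z' = 1" using z unfolding knorm_def z'_def by simp
      fix i assume i: "i \<in> V"
      have "\<bar>z i\<bar> ^ k \<le> 1 ^ k" using abs_le_knorm[OF i, of z] z by simp
      then have "\<bar>z i\<bar> \<le> 1" using k_ge_2 power_le_one_iff[of "\<bar>z i\<bar>" k] by simp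
      then show "0 \<le> z' i" "z' i \<le> 1" using i by (simp_all add: z'_def)
    qed (simp add: z'_def)
    ultimately show ?thesis using form_le_form_abs[of z] z0(2)[of z'] by simp
  qed
  with z0(1) show thesis by (rule that)
qed

definition maximizer :: "(nat \<Rightarrow> real) \<Rightarrow> bool" where
  "maximizer z0 \<longleftrightarrow> z0 \<in> nonneg_sphere \<and> (\<forall>z. real k * form z \<le> rho * knorm z) \<and> rho = real k * form z0"

lemma maximizer_exists:
  assumes "V \<noteq> {}"
  obtains z0 where "maximizer z0"
proof -
  obtain z0 where z0: "z0 \<in> nonneg_sphere" "\<And>z. knorm z = 1 \<Longrightarrow> form z \<le> form z0"
    using form_max_on_nonneg_sphere[OF assms] by blast
  have hom: "form z \<le> form z0 * knorm z" for z
  proof (cases "knorm z = 0")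
    case True
    then show ?thesis using form_eq_0_if_knorm_eq_0 by simp
  next
    case False
    then have pos: "knorm z > 0" using knorm_nonneg[of z] by simp
    define c where "c = root k (1 / knorm z)"
    have ck: "c ^ k = 1 / knorm z" unfolding c_def using pos k_ge_2 by (intro real_root_pow_pos2) auto
    have "c \<ge> 0" unfolding c_def using pos by (simp add: real_root_ge_zero)
    then have "knorm (\<lambda>v. c * z v) = 1" using knorm_scale ck pos by simp
    then have "form z / knorm z \<le> form z0" using z0(2) form_scale ck by fastforce
    then show ?thesis using pos by (simp add: divide_le_eq)
  qed
  have "rho = real k * form z0"
    unfolding rho_def
  proof (rule cSup_eq_maximum)
    show "real k * form z0 \<in> {real k * form z |z. knorm z = 1}"
      using z0(1) unfolding mem_nonneg_sphere_iff by auto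
    show "x \<le> real k * form z0" if x: "x \<in> {real k * form z |z. knorm z = 1}" for x
      using x z0(2) by (auto intro: mult_left_mono)
  qed
  moreover have "real k * form z \<le> real k * form z0 * knorm z" for z
    using hom[of z] by (simp add: mult.assoc mult_left_mono)
  ultimately have "maximizer z0" using z0(1) unfolding maximizer_def by simp
  then show thesis by (rule that)
qed

lemma form_fun_upd: "form (z(i := a)) = form z + (a - z i) * grad i z"
proof -
  have "form (z(i := a)) - form z
      = (\<Sum>e\<in>E. if i \<in> vs e then w e * ((a - z i) * (\<Prod>v\<in>vs e - {i}. z v)) else 0)"
    unfolding form_def sum_subtractf[symmetric]
  proof (intro sum.cong refl)
    fix e assume e: "e \<in> E"
    show "w e * (\<Prod>v\<in>vs e. (z(i := a)) v) - w e * (\<Prod>v\<in>vs e. z v) =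
          (if i \<in> vs e then w e * ((a - z i) * (\<Prod>v\<in>vs e - {i}. z v)) else 0)"
    proof (cases "i \<in> vs e")
      case True
      have "(\<Prod>v\<in>vs e - {i}. (z(i := a)) v) = (\<Prod>v\<in>vs e - {i}. z v)" by (intro prod.cong) auto
      then show ?thesis
        using True prod_remove_vertex[OF e True, of "z(i := a)"] prod_remove_vertex[OF e True, of z]
        by (simp add: algebra_simps)
    next
      case False
      then have "(\<Prod>v\<in>vs e. (z(i := a)) v) = (\<Prod>v\<in>vs e. z v)" by (intro prod.cong) auto
      then show ?thesis using False by simp
    qed
  qed
  also have "\<dots> = (\<Sum>e\<in>{e\<in>E. i \<in> vs e}. w e * ((a - z i) * (\<Prod>v\<in>vs e - {i}. z v)))"
    by (rule sum.inter_filter[OF finite_E, symmetric])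
  also have "\<dots> = (a - z i) * grad i z" unfolding grad_def sum_distrib_left by (simp add: algebra_simps)
  finally show ?thesis by simp
qed

lemma knorm_fun_upd: "i \<in> V \<Longrightarrow> knorm (z(i := a)) = (\<Sum>j\<in>V - {i}. \<bar>z j\<bar> ^ k) + \<bar>a\<bar> ^ k"
  unfolding knorm_def using finite_V by (subst sum.remove[of V i]) (auto intro!: sum.cong)

text \<open>At a positive coordinate the maximizer is an interior local minimum of
  \<open>s \<mapsto> rho * knorm (z0(i := z0 i + s)) - k * form (z0(i := z0 i + s))\<close>; its vanishing
  derivative is the eigenequation at \<open>i\<close>.\<close>
lemma maximizer_eigenequation:
  assumes z0: "maximizer z0" and i: "i \<in> V" and pos: "z0 i > 0"
  shows "rho * z0 i ^ (k - 1) = grad i z0"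
proof -
  have knorm1: "knorm z0 = 1" and hom: "\<And>z. real k * form z \<le> rho * knorm z"
    and rho: "rho = real k * form z0"
    using z0 unfolding maximizer_def mem_nonneg_sphere_iff by auto
  define S where "S = (\<Sum>j\<in>V - {i}. \<bar>z0 j\<bar> ^ k)"
  define \<psi> where "\<psi> s = rho * (S + (z0 i + s) ^ k) - real k * (form z0 + s * grad i z0)" for s
  have D: "DERIV \<psi> 0 :> rho * (real k * z0 i ^ (k - 1)) - real k * grad i z0"
    unfolding \<psi>_def by (auto intro!: derivative_eq_intros)
  have "knorm z0 = S + z0 i ^ k"
    unfolding S_def knorm_def using finite_V i pos by (subst sum.remove[of V i]) auto
  then have "\<psi> 0 = 0" unfolding \<psi>_def using knorm1 rho by simp
  have "\<forall>s. \<bar>0 - s\<bar> < z0 i \<longrightarrow> \<psi> 0 \<le> \<psi> s"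
  proof (intro allI impI)
    fix s assume "\<bar>0 - s\<bar> < z0 i"
    then have "z0 i + s > 0" by auto
    then have "\<psi> s = rho * knorm (z0(i := z0 i + s)) - real k * form (z0(i := z0 i + s))"
      unfolding \<psi>_def knorm_fun_upd[OF i] form_fun_upd S_def by simp
    then show "\<psi> 0 \<le> \<psi> s" using hom[of "z0(i := z0 i + s)"] \<open>\<psi> 0 = 0\<close> by simp
  qed
  from DERIV_local_min[OF D pos this] have "real k * (rho * z0 i ^ (k - 1) - grad i z0) = 0"
    by (simp add: algebra_simps)
  then show ?thesis using k_ge_2 by simp
qed

lemma form_diff_ge_edge:
  assumes e: "e \<in> E" and mono: "\<And>v. v \<in> V \<Longrightarrow> 0 \<le> z v \<and> z v \<le> z' v"
  shows "form z' - form z \<ge> w e * ((\<Prod>v\<in>vs e. z' v) - (\<Prod>v\<in>vs e. z v))"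
proof -
  have "form z' - form z = (\<Sum>e'\<in>E. w e' * ((\<Prod>v\<in>vs e'. z' v) - (\<Prod>v\<in>vs e'. z v)))"
    unfolding form_def by (simp add: sum_subtractf[symmetric] algebra_simps)
  also have "\<dots> \<ge> w e * ((\<Prod>v\<in>vs e. z' v) - (\<Prod>v\<in>vs e. z v))"
  proof (rule member_le_sum[OF e _ finite_E])
    fix x assume "x \<in> E - {e}"
    then have x: "x \<in> E" by auto
    have "(\<Prod>v\<in>vs x. z v) \<le> (\<Prod>v\<in>vs x. z' v)"
      using mono edge_subset[OF x] by (intro prod_mono) auto
    then show "0 \<le> w x * ((\<Prod>v\<in>vs x. z' v) - (\<Prod>v\<in>vs x. z v))" using weight_nonneg[OF x] by simp
  qed
  finally show ?thesis .
qed

text \<open>Raising the \<open>m\<close> zero coordinates of a maximizer on an edge to \<open>t\<close> gains a term of order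
  \<open>t ^ m\<close> in the form but costs only \<open>m * t ^ k\<close> in the norm.\<close>
lemma maximizer_edge_bound:
  assumes z0: "maximizer z0" and e: "e \<in> E"
    and A: "A = {v \<in> vs e. z0 v = 0}" "A \<noteq> {}" "A \<noteq> vs e" and t: "0 < t" "t \<le> 1"
  shows "real k * (w e * (\<Prod>v\<in>vs e - A. z0 v)) \<le> rho * card A * t"
proof -
  have knorm1: "knorm z0 = 1" and hom: "\<And>z. real k * form z \<le> rho * knorm z"
    and rho: "rho = real k * form z0" and nonneg: "\<And>v. v \<in> V \<Longrightarrow> z0 v \<ge> 0"
    using z0 unfolding maximizer_def mem_nonneg_sphere_iff by auto
  define m where "m = card A"
  define C where "C = w e * (\<Prod>v\<in>vs e - A. z0 v)"
  define zt where "zt v = (if v \<in> A then t else z0 v)" for v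
  have fin: "finite (vs e)" using finite_edge[OF e] .
  have AV: "A \<subseteq> V" using edge_subset[OF e] A(1) by auto
  have "A \<subset> vs e" using A by auto
  then have "m < k" unfolding m_def using psubset_card_mono[OF fin] card_edge[OF e] by auto
  have rho_nonneg: "rho \<ge> 0" unfolding rho using form_nonneg nonneg by auto
  have mono: "\<And>v. v \<in> V \<Longrightarrow> 0 \<le> z0 v \<and> z0 v \<le> zt v"
    unfolding zt_def A(1) using t nonneg by auto
  have "form zt - form z0 \<ge> w e * ((\<Prod>v\<in>vs e. zt v) - (\<Prod>v\<in>vs e. z0 v))"
    by (rule form_diff_ge_edge[OF e mono])
  also have "(\<Prod>v\<in>vs e. z0 v) = 0" using A fin by (intro prod_zero) auto
  also have "(\<Prod>v\<in>vs e. zt v) = (\<Prod>v\<in>vs e - A. zt v) * (\<Prod>v\<in>A. zt v)"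
    using fin unfolding A(1) by (intro prod.subset_diff) auto
  also have "(\<Prod>v\<in>vs e - A. zt v) = (\<Prod>v\<in>vs e - A. z0 v)" unfolding zt_def by (intro prod.cong) auto
  also have "(\<Prod>v\<in>A. zt v) = t ^ m" unfolding zt_def m_def by simp
  finally have form_gain: "form zt \<ge> form z0 + C * t ^ m" unfolding C_def by (simp add: algebra_simps)
  have split: "knorm z = (\<Sum>v\<in>V - A. \<bar>z v\<bar> ^ k) + (\<Sum>v\<in>A. \<bar>z v\<bar> ^ k)" for z
    unfolding knorm_def using AV finite_V by (intro sum.subset_diff) auto
  have "(\<Sum>v\<in>A. \<bar>z0 v\<bar> ^ k) = 0" unfolding A(1) using k_ge_2 by simp
  then have "knorm zt = 1 + real m * t ^ k"
    using split[of zt] split[of z0] knorm1 t unfolding zt_def m_def by simp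
  moreover have "real k * (form z0 + C * t ^ m) \<le> real k * form zt"
    using form_gain by (intro mult_left_mono) auto
  ultimately have "real k * (form z0 + C * t ^ m) \<le> rho * (1 + real m * t ^ k)"
    using hom[of zt] by simp
  then have "real k * C * t ^ m \<le> rho * real m * t ^ k"
    using rho by (simp add: algebra_simps)
  also have "t ^ k = t ^ m * t ^ (k - m)" using \<open>m < k\<close> by (simp flip: power_add)
  also have "rho * real m * (t ^ m * t ^ (k - m)) \<le> rho * real m * (t ^ m * t)"
  proof -
    have "t ^ (k - m) \<le> t" using power_decreasing[of 1 "k - m" t] \<open>m < k\<close> t by simp
    then show ?thesis using rho_nonneg t by (intro mult_left_mono) auto
  qed
  finally have "(real k * C) * t ^ m \<le> (rho * real m * t) * t ^ m" by (simp add: algebra_simps)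
  then show ?thesis using t unfolding C_def m_def by simp
qed

lemma maximizer_positive:
  assumes connected and z0: "maximizer z0"
  shows "\<forall>i\<in>V. z0 i > 0"
proof (rule ccontr)
  assume not_pos: "\<not> (\<forall>i\<in>V. z0 i > 0)"
  have nonneg: "\<And>i. i \<in> V \<Longrightarrow> z0 i \<ge> 0" and knorm1: "knorm z0 = 1"
    and rho: "rho = real k * form z0"
    using z0 unfolding maximizer_def mem_nonneg_sphere_iff by auto
  have "\<exists>a\<in>V. z0 a > 0"
  proof (rule ccontr)
    assume "\<not> (\<exists>a\<in>V. z0 a > 0)"
    then have "\<And>i. i \<in> V \<Longrightarrow> z0 i = 0" using nonneg by (meson antisym not_less)
    then have "knorm z0 = 0" unfolding knorm_def using k_ge_2 by simp
    then show False using knorm1 by simp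
  qed
  then obtain a where a: "a \<in> V" "z0 a > 0" by blast
  have "\<not> V \<subseteq> {i. z0 i > 0}" using not_pos by auto
  then obtain e p q where e: "e \<in> E" "w e > 0" "p \<in> vs e" "q \<in> vs e" "z0 p > 0" "\<not> z0 q > 0"
    using connected_closed_subset[OF \<open>connected\<close> a(1), of "{i. z0 i > 0}"] a(2) by blast
  define A where "A = {v \<in> vs e. z0 v = 0}"
  define C where "C = w e * (\<Prod>v\<in>vs e - A. z0 v)"
  have "q \<in> A" using e edge_subset nonneg unfolding A_def by force
  moreover have "p \<notin> A" using e unfolding A_def by auto
  ultimately have A_ne: "A \<noteq> {}" "A \<noteq> vs e" using e(3) by auto
  have C_pos: "C > 0" unfolding C_def using e(2)
  proof (intro mult_pos_pos prod_pos)
    fix v assume "v \<in> vs e - A"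
    then show "z0 v > 0" using edge_subset[OF e(1)] nonneg unfolding A_def by force
  qed auto
  have rho_nonneg: "rho \<ge> 0" unfolding rho using form_nonneg nonneg by auto
  define t where "t = min 1 (real k * C / (2 * (rho * card A + 1)))"
  have t: "t > 0" "t \<le> 1" unfolding t_def using C_pos k_ge_2 rho_nonneg
    by (auto intro!: divide_pos_pos add_nonneg_pos)
  have "real k * C \<le> rho * card A * t"
    using maximizer_edge_bound[OF z0 e(1) A_def A_ne t] unfolding C_def .
  also have "\<dots> \<le> rho * card A * (real k * C / (2 * (rho * card A + 1)))"
    unfolding t_def using rho_nonneg by (intro mult_left_mono) auto
  also have "\<dots> < real k * C"
  proof -
    have "rho * card A \<ge> 0" using rho_nonneg by simp
    then have "rho * card A / (2 * (rho * card A + 1)) < 1" by (simp add: mult.commute)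
    from mult_strict_right_mono[OF this, of "real k * C"] show ?thesis
      using C_pos k_ge_2 by simp
  qed
  finally show False by simp
qed

lemma eigenpair_exists:
  assumes connected and "V \<noteq> {}"
  shows "\<exists>y. eigenpair rho y"
proof -
  obtain z0 where z0: "maximizer z0" using maximizer_exists[OF \<open>V \<noteq> {}\<close>] by blast
  have pos: "\<forall>i\<in>V. z0 i > 0" by (rule maximizer_positive[OF \<open>connected\<close> z0])
  have "knorm z0 = 1" "\<And>i. i \<notin> V \<Longrightarrow> z0 i = 0"
    using z0 unfolding maximizer_def mem_nonneg_sphere_iff by auto
  moreover have "(\<Sum>i\<in>V. z0 i ^ k) = knorm z0" unfolding knorm_def by (intro sum.cong) (use pos in auto)
  ultimately have "eigenpair rho z0"
    unfolding eigenpair_def using pos maximizer_eigenequation[OF z0] by auto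
  then show ?thesis by blast
qed

lemma eigenpair_The:
  assumes connected and "V \<noteq> {}"
  shows "eigenpair rho (THE y. eigenpair rho y)"
  using eigenpair_exists[OF assms] eigenpair_unique[OF \<open>connected\<close>] by (metis theI)

end

section \<open>Principal eigenvectors of a hypergraph and of its clique-shadow\<close>

abbreviation hyper_eigenpair :: "nat \<Rightarrow> nat \<Rightarrow> nat set set \<Rightarrow> real \<Rightarrow> (nat \<Rightarrow> real) \<Rightarrow> bool" where
  "hyper_eigenpair n k E \<equiv> uniform_weighted_hypergraph.eigenpair {1..n} E (\<lambda>e. e) (\<lambda>_. 1) k"

lemma kuniform_hypergraph:
  assumes "kuniform n k E" "k \<ge> 2"
  shows "uniform_weighted_hypergraph {1..n} E (\<lambda>e. e) (\<lambda>_. 1) k"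
  using assms unfolding kuniform_def by unfold_locales auto

lemma hpev_eigenpair_iff:
  assumes "kuniform n k E" "k \<ge> 2" "hconnected n E"
  shows "hyper_eigenpair n k E lam y \<longleftrightarrow> lam = hrho n k E \<and> y = hpev n k E"
proof -
  interpret H: uniform_weighted_hypergraph "{1..n}" E "\<lambda>e. e" "\<lambda>_. 1" k
    by (rule kuniform_hypergraph[OF assms(1,2)])
  have rho: "H.rho = hrho n k E" unfolding H.rho_def H.form_def H.knorm_def hrho_def by simp
  have pev: "hpev n k E = (THE y. H.eigenpair H.rho y)"
    unfolding hpev_def H.eigenpair_def H.grad_def rho by simp
  have conn: H.connected using assms(3) unfolding H.connected_def hconnected_def by simp
  have "{1..n} \<noteq> {}" using assms(3) unfolding hconnected_def by auto
  with H.eigenpair_The[OF conn] have "H.eigenpair H.rho (hpev n k E)" unfolding pev .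
  then show ?thesis
    using H.rho_eq_eigenvalue[of lam y] H.eigenpair_unique[OF conn, of _ y] rho by auto
qed

text \<open>The clique-shadow as a 2-uniform weighted hypergraph: each unordered pair appears twice,
  as two ordered pairs of weight \<open>mu / 2\<close>, so that twice the form is the quadratic form of the
  shadow adjacency matrix.\<close>
definition shadow_pairs :: "nat \<Rightarrow> (nat \<times> nat) set" where
  "shadow_pairs n = {(i, j). i \<in> {1..n} \<and> j \<in> {1..n} \<and> i \<noteq> j}"

definition pair_vertices :: "nat \<times> nat \<Rightarrow> nat set" where
  "pair_vertices p = {fst p, snd p}"

definition shadow_weight :: "nat set set \<Rightarrow> nat \<times> nat \<Rightarrow> real" where
  "shadow_weight E p = mu E (fst p) (snd p) / 2"

abbreviation shadow_eigenpair :: "nat \<Rightarrow> nat set set \<Rightarrow> real \<Rightarrow> (nat \<Rightarrow> real) \<Rightarrow> bool" where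
  "shadow_eigenpair n E \<equiv>
     uniform_weighted_hypergraph.eigenpair {1..n} (shadow_pairs n) pair_vertices (shadow_weight E) 2"

lemma mu_sym: "mu E i j = mu E j i"
  unfolding mu_def by (auto intro!: arg_cong[where f=card])

lemma shadow_hypergraph: "uniform_weighted_hypergraph {1..n} (shadow_pairs n) pair_vertices (shadow_weight E) 2"
proof
  show "finite (shadow_pairs n)"
    by (rule finite_subset[of _ "{1..n} \<times> {1..n}"]) (auto simp: shadow_pairs_def)
qed (auto simp: shadow_pairs_def pair_vertices_def shadow_weight_def mu_def)

lemma shadow_grad:
  assumes i: "i \<in> {1..n}"
  shows "uniform_weighted_hypergraph.grad (shadow_pairs n) pair_vertices (shadow_weight E) i x
    = (\<Sum>j\<in>{1..n}. mu E i j * x j)"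
proof -
  let ?V = "{1..n}" and ?h = "\<lambda>p. shadow_weight E p * (\<Prod>v\<in>pair_vertices p - {i}. x v)"
  have pairs: "{p \<in> shadow_pairs n. i \<in> pair_vertices p} = Pair i ` (?V - {i}) \<union> (\<lambda>j. (j, i)) ` (?V - {i})"
    using i by (auto simp: shadow_pairs_def pair_vertices_def)
  have "uniform_weighted_hypergraph.grad (shadow_pairs n) pair_vertices (shadow_weight E) i x
      = (\<Sum>p\<in>Pair i ` (?V - {i}). ?h p) + (\<Sum>p\<in>(\<lambda>j. (j, i)) ` (?V - {i}). ?h p)"
    unfolding uniform_weighted_hypergraph.grad_def[OF shadow_hypergraph] pairs
    by (intro sum.union_disjoint) auto
  also have "\<dots> = (\<Sum>j\<in>?V - {i}. mu E i j / 2 * x j) + (\<Sum>j\<in>?V - {i}. mu E i j / 2 * x j)"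
    by (subst (1 2) sum.reindex)
      (auto simp: inj_on_def shadow_weight_def pair_vertices_def insert_Diff_if mu_sym intro!: sum.cong)
  also have "\<dots> = (\<Sum>j\<in>?V - {i}. mu E i j * x j)"
    unfolding sum.distrib[symmetric] by (intro sum.cong) auto
  also have "\<dots> = (\<Sum>j\<in>?V. mu E i j * x j)"
    using i by (intro sum.mono_neutral_left) (auto simp: mu_def)
  finally show ?thesis .
qed

lemma shadow_rho: "uniform_weighted_hypergraph.rho {1..n} (shadow_pairs n) pair_vertices (shadow_weight E) 2
    = shadow_lambda n E"
proof -
  have "2 * uniform_weighted_hypergraph.form (shadow_pairs n) pair_vertices (shadow_weight E) x
      = (\<Sum>i\<in>{1..n}. \<Sum>j\<in>{1..n}. mu E i j * x i * x j)" for x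
  proof -
    have "2 * uniform_weighted_hypergraph.form (shadow_pairs n) pair_vertices (shadow_weight E) x
        = (\<Sum>p\<in>shadow_pairs n. mu E (fst p) (snd p) * x (fst p) * x (snd p))"
      unfolding uniform_weighted_hypergraph.form_def[OF shadow_hypergraph] sum_distrib_left
      by (intro sum.cong refl) (auto simp: shadow_pairs_def pair_vertices_def shadow_weight_def)
    also have "\<dots> = (\<Sum>p\<in>{1..n} \<times> {1..n}. mu E (fst p) (snd p) * x (fst p) * x (snd p))"
      by (intro sum.mono_neutral_left) (auto simp: shadow_pairs_def mu_def)
    finally show ?thesis by (simp add: sum.cartesian_product case_prod_beta)
  qed
  then show ?thesis
    unfolding uniform_weighted_hypergraph.rho_def[OF shadow_hypergraph]
      uniform_weighted_hypergraph.knorm_def[OF shadow_hypergraph] shadow_lambda_def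
    by simp
qed

lemma shadow_connected:
  assumes "kuniform n k E" "hconnected n E"
  shows "uniform_weighted_hypergraph.connected {1..n} (shadow_pairs n) pair_vertices (shadow_weight E)"
  unfolding uniform_weighted_hypergraph.connected_def[OF shadow_hypergraph]
proof (intro ballI)
  let ?R = "{(a, b). \<exists>e\<in>E. a \<in> e \<and> b \<in> e}"
  let ?S = "{(a, b). \<exists>p\<in>shadow_pairs n. 0 < shadow_weight E p \<and> a \<in> pair_vertices p \<and> b \<in> pair_vertices p}"
  have "?R \<subseteq> ?S\<^sup>="
  proof (rule subrelI)
    fix a b assume "(a, b) \<in> ?R"
    then obtain e where e: "e \<in> E" "a \<in> e" "b \<in> e" by blast
    show "(a, b) \<in> ?S\<^sup>="
    proof (cases "a = b")
      case False
      have "finite E" "e \<subseteq> {1..n}" using e(1) assms(1) unfolding kuniform_def by auto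
      moreover have "e \<in> {x\<in>E. a \<in> x \<and> b \<in> x}" using e by blast
      ultimately have "card {x\<in>E. a \<in> x \<and> b \<in> x} > 0" using card_gt_0_iff by fastforce
      then have "shadow_weight E (a, b) > 0" using False by (simp add: shadow_weight_def mu_def)
      moreover have "(a, b) \<in> shadow_pairs n" using e \<open>e \<subseteq> {1..n}\<close> False
        by (auto simp: shadow_pairs_def)
      moreover have "a \<in> pair_vertices (a, b)" "b \<in> pair_vertices (a, b)"
        by (simp_all add: pair_vertices_def)
      ultimately have "\<exists>p\<in>shadow_pairs n. 0 < shadow_weight E p \<and> a \<in> pair_vertices p \<and> b \<in> pair_vertices p"
        by blast
      then show ?thesis by simp
    qed simp
  qed
  then have "?R\<^sup>* \<subseteq> (?S\<^sup>=)\<^sup>*" by (rule rtrancl_mono)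
  then have "?R\<^sup>* \<subseteq> ?S\<^sup>*" by (simp only: rtrancl_reflcl)
  moreover fix u v assume "u \<in> {1..n}" "v \<in> {1..n}"
  then have "(u, v) \<in> ?R\<^sup>*" using assms(2) unfolding hconnected_def by blast
  ultimately show "(u, v) \<in> ?S\<^sup>*" by blast
qed

lemma spev_eigenpair_iff:
  assumes "kuniform n k E" "hconnected n E"
  shows "shadow_eigenpair n E lam x \<longleftrightarrow> lam = shadow_lambda n E \<and> x = spev n E"
proof -
  interpret S: uniform_weighted_hypergraph "{1..n}" "shadow_pairs n" pair_vertices "shadow_weight E" 2
    by (rule shadow_hypergraph)
  have "(\<forall>i\<in>{1..n}. (\<Sum>j\<in>{1..n}. mu E i j * x j) = shadow_lambda n E * x i) \<longleftrightarrow>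
        (\<forall>i\<in>{1..n}. shadow_lambda n E * x i ^ (2 - 1) = S.grad i x)" for x
    using shadow_grad[of _ n E x] by force
  then have pev: "spev n E = (THE x. S.eigenpair S.rho x)"
    unfolding spev_def S.eigenpair_def shadow_rho by presburger
  have conn: S.connected by (rule shadow_connected[OF assms])
  have "{1..n} \<noteq> {}" using assms(2) unfolding hconnected_def by auto
  with S.eigenpair_The[OF conn] have "S.eigenpair S.rho (spev n E)" unfolding pev .
  then show ?thesis
    using S.rho_eq_eigenvalue[of lam x] S.eigenpair_unique[OF conn, of _ x] shadow_rho by auto
qed

section \<open>The hyperstar and its windmill shadow\<close>

definition petal :: "nat \<Rightarrow> nat \<Rightarrow> nat set" where
  "petal k j = {2 + (j - 1) * (k - 1) .. 1 + j * (k - 1)}"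

lemma star_edges_petal: "star_edges eta k = (\<lambda>j. insert 1 (petal k j)) ` {1..eta}"
  unfolding star_edges_def petal_def ..

definition windmill_disc :: "nat \<Rightarrow> nat \<Rightarrow> real" where
  "windmill_disc k eta = sqrt ((real k - 2) ^ 2 + 4 * (real eta * (real k - 1)))"

locale hyperstar =
  fixes k eta :: nat
  assumes k_ge_3: "k \<ge> 3" and eta_ge_1: "eta \<ge> 1"
begin

abbreviation "n \<equiv> star_n eta k"
abbreviation "edges \<equiv> star_edges eta k"
abbreviation "edge j \<equiv> insert 1 (petal k j)"
abbreviation "leaves \<equiv> {2..n}"

lemma n_eq: "n = 1 + eta * (k - 1)" unfolding star_n_def ..

lemma vertices_eq: "{1..n} = insert 1 leaves"
  using n_eq by auto

lemma card_leaves: "card leaves = eta * (k - 1)"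
  using n_eq by simp

lemma petal_shift:
  "j \<ge> 1 \<Longrightarrow> petal k j = {2 + (j - 1) * (k - 1) .. 1 + (j - 1) * (k - 1) + (k - 1)}"
  unfolding petal_def by (cases j) (auto simp: add.commute)

lemma mem_petal_iff:
  assumes j: "j \<ge> 1"
  shows "v \<in> petal k j \<longleftrightarrow> 2 \<le> v \<and> (v - 2) div (k - 1) = j - 1"
proof -
  let ?q = "k - 1"
  define a where "a = (j - 1) * ?q"
  have q: "?q > 0" using k_ge_3 by simp
  have petal: "petal k j = {2 + a .. 1 + a + ?q}" unfolding a_def using petal_shift[OF j] .
  show ?thesis
  proof
    assume "v \<in> petal k j"
    then have "2 \<le> v" "?q * (j - 1) \<le> v - 2" "v - 2 < ?q * Suc (j - 1)"
      unfolding petal a_def by (auto simp: mult.commute)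
    then show "2 \<le> v \<and> (v - 2) div ?q = j - 1" using div_nat_eqI by blast
  next
    assume v: "2 \<le> v \<and> (v - 2) div ?q = j - 1"
    then have "a \<le> v - 2" using div_times_less_eq_dividend[of "v - 2" ?q] unfolding a_def by simp
    moreover have "v - 2 < ?q + a" using dividend_less_div_times[OF q, of "v - 2"] v unfolding a_def by simp
    ultimately show "v \<in> petal k j" unfolding petal using v by auto
  qed
qed

lemma petal_unique: "j \<ge> 1 \<Longrightarrow> j' \<ge> 1 \<Longrightarrow> v \<in> petal k j \<Longrightarrow> v \<in> petal k j' \<Longrightarrow> j = j'"
  using mem_petal_iff by force

lemma one_notin_petal: "1 \<notin> petal k j"
  unfolding petal_def by auto

lemma card_petal: "j \<ge> 1 \<Longrightarrow> card (petal k j) = k - 1"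
  using petal_shift by simp

lemma petal_subset_leaves: "j \<in> {1..eta} \<Longrightarrow> petal k j \<subseteq> leaves"
proof -
  assume "j \<in> {1..eta}"
  then have "j * (k - 1) \<le> eta * (k - 1)" by simp
  then show ?thesis unfolding petal_def n_eq by auto
qed

lemma leaf_in_petal:
  assumes v: "v \<in> leaves"
  obtains j where "j \<in> {1..eta}" "v \<in> petal k j"
proof -
  define j where "j = (v - 2) div (k - 1) + 1"
  have "v - 2 < eta * (k - 1)" using v n_eq by auto
  then have "j \<le> eta" unfolding j_def using less_mult_imp_div_less by (simp add: Suc_le_eq)
  moreover have "v \<in> petal k j" using mem_petal_iff[of j v] v unfolding j_def by simp
  ultimately show thesis using that[of j] unfolding j_def by simp
qed

lemma card_edge: "j \<ge> 1 \<Longrightarrow> card (edge j) = k"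
  using card_petal one_notin_petal k_ge_3 by (simp add: petal_def)

lemma inj_on_edge: "inj_on (\<lambda>j. edge j) {1..eta}"
proof (rule inj_onI)
  fix j j' assume j: "j \<in> {1..eta}" "j' \<in> {1..eta}" and "edge j = edge j'"
  then have "petal k j = petal k j'" using one_notin_petal by (metis insert_ident)
  moreover have "petal k j \<noteq> {}" using card_petal[of j] j k_ge_3 by fastforce
  ultimately show "j = j'" using petal_unique j by auto
qed

lemma edge_subset_vertices: "j \<in> {1..eta} \<Longrightarrow> edge j \<subseteq> {1..n}"
  using petal_subset_leaves vertices_eq by auto

lemma kuniform_star: "kuniform n k edges"
  unfolding kuniform_def star_edges_petal using card_edge edge_subset_vertices by auto

lemma edges_containing_center: "{e \<in> edges. 1 \<in> e} = edges"
  unfolding star_edges_petal by blast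

lemma edges_containing_leaf:
  assumes j: "j \<in> {1..eta}" and v: "v \<in> petal k j"
  shows "{e \<in> edges. v \<in> e} = {edge j}"
proof
  show "{e \<in> edges. v \<in> e} \<subseteq> {edge j}"
  proof
    fix e assume "e \<in> {e \<in> edges. v \<in> e}"
    moreover have "v \<noteq> 1" using v one_notin_petal by blast
    ultimately obtain j' where "j' \<in> {1..eta}" "e = edge j'" "v \<in> petal k j'"
      unfolding star_edges_petal by blast
    then show "e \<in> {edge j}" using petal_unique[of j j' v] j v by simp
  qed
  show "{edge j} \<subseteq> {e \<in> edges. v \<in> e}" using j v unfolding star_edges_petal by blast
qed

lemma hconnected_star: "hconnected n edges"
  unfolding hconnected_def
proof (intro conjI ballI)
  show "1 \<le> n" using n_eq by simp
  let ?R = "{(a, b). \<exists>e\<in>edges. a \<in> e \<and> b \<in> e}"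
  have center: "(u, 1) \<in> ?R \<and> (1, u) \<in> ?R" if u: "u \<in> {1..n}" for u
  proof (cases "u = 1")
    case True
    have "edge 1 \<in> edges" unfolding star_edges_petal using eta_ge_1 by auto
    then show ?thesis using True by blast
  next
    case False
    then have "u \<in> leaves" using u by auto
    then obtain j where "j \<in> {1..eta}" "u \<in> petal k j" by (rule leaf_in_petal)
    moreover from this have "edge j \<in> edges" unfolding star_edges_petal by auto
    ultimately show ?thesis by blast
  qed
  fix u v assume "u \<in> {1..n}" "v \<in> {1..n}"
  then show "(u, v) \<in> ?R\<^sup>*" using center by (meson r_into_rtrancl rtrancl_trans)
qed

definition profile :: "real \<Rightarrow> real \<Rightarrow> nat \<Rightarrow> real" where
  "profile a b v = (if v = 1 then a else if v \<in> leaves then b else 0)"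

lemma profile_pos: "a > 0 \<Longrightarrow> b > 0 \<Longrightarrow> v \<in> {1..n} \<Longrightarrow> profile a b v > 0"
  unfolding profile_def by auto

lemma profile_outside: "v \<notin> {1..n} \<Longrightarrow> profile a b v = 0"
  unfolding profile_def vertices_eq by auto

lemma sum_profile_power: "(\<Sum>v\<in>{1..n}. profile a b v ^ p) = a ^ p + real (eta * (k - 1)) * b ^ p"
proof -
  have "(\<Sum>v\<in>leaves. profile a b v ^ p) = (\<Sum>v\<in>leaves. b ^ p)"
    by (intro sum.cong) (auto simp: profile_def)
  also have "\<dots> = real (eta * (k - 1)) * b ^ p" unfolding sum_constant card_leaves ..
  finally show ?thesis unfolding vertices_eq by (simp add: profile_def)
qed

lemma prod_profile_petal:
  assumes j: "j \<in> {1..eta}"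
  shows "(\<Prod>v\<in>petal k j - A. profile a b v) = b ^ card (petal k j - A)"
proof -
  have "profile a b v = b" if "v \<in> petal k j - A" for v
    using that petal_subset_leaves[OF j] one_notin_petal[of j] unfolding profile_def by auto
  then show ?thesis by simp
qed

sublocale H: uniform_weighted_hypergraph "{1..n}" edges "\<lambda>e. e" "\<lambda>_. 1" k
  using kuniform_hypergraph[OF kuniform_star] k_ge_3 by simp

lemma hyper_grad_center: "H.grad 1 (profile a b) = real eta * b ^ (k - 1)"
proof -
  have "H.grad 1 (profile a b) = (\<Sum>e\<in>edges. \<Prod>v\<in>e - {1}. profile a b v)"
    unfolding H.grad_def edges_containing_center by simp
  also have "\<dots> = (\<Sum>j\<in>{1..eta}. \<Prod>v\<in>edge j - {1}. profile a b v)"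
    unfolding star_edges_petal by (rule sum.reindex[OF inj_on_edge, unfolded comp_def])
  also have "\<dots> = (\<Sum>j\<in>{1..eta}. b ^ (k - 1))"
  proof (intro sum.cong refl)
    fix j assume j: "j \<in> {1..eta}"
    have "edge j - {1} = petal k j - {}" using one_notin_petal by auto
    then show "(\<Prod>v\<in>edge j - {1}. profile a b v) = b ^ (k - 1)"
      using prod_profile_petal[OF j, where A = "{}"] card_petal j by simp
  qed
  finally show ?thesis by simp
qed

lemma hyper_grad_leaf:
  assumes "v \<in> leaves"
  shows "H.grad v (profile a b) = a * b ^ (k - 2)"
proof -
  obtain j where j: "j \<in> {1..eta}" "v \<in> petal k j" using assms by (rule leaf_in_petal)
  have "edge j - {v} = insert 1 (petal k j - {v})" using assms by auto
  then have "H.grad v (profile a b) = profile a b 1 * (\<Prod>u\<in>petal k j - {v}. profile a b u)"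
    unfolding H.grad_def edges_containing_leaf[OF j]
    using one_notin_petal[of j] by (simp add: petal_def)
  also have "\<dots> = a * b ^ (k - 2)"
    using prod_profile_petal[OF j(1), where A = "{v}"] card_petal j by (simp add: profile_def numeral_2_eq_2)
  finally show ?thesis .
qed

lemma mu_center_leaf: "v \<in> leaves \<Longrightarrow> mu edges 1 v = 1"
proof -
  assume v: "v \<in> leaves"
  then obtain j where j: "j \<in> {1..eta}" "v \<in> petal k j" by (rule leaf_in_petal)
  have "{e \<in> edges. 1 \<in> e \<and> v \<in> e} = {e \<in> edges. v \<in> e}" unfolding star_edges_petal by blast
  then show ?thesis unfolding mu_def using edges_containing_leaf[OF j] v by simp
qed

lemma mu_leaf_leaf:
  assumes j: "j \<in> {1..eta}" "u \<in> petal k j" and v: "v \<in> leaves" "v \<noteq> u"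
  shows "mu edges u v = (if v \<in> petal k j then 1 else 0)"
proof -
  have "{e \<in> edges. u \<in> e \<and> v \<in> e} = {e \<in> {edge j}. v \<in> e}"
    using edges_containing_leaf[OF j] by blast
  moreover have "{e \<in> {edge j}. v \<in> e} = (if v \<in> petal k j then {edge j} else {})"
    using v by auto
  ultimately show ?thesis using v unfolding mu_def by simp
qed

lemma shadow_grad_center: "(\<Sum>v\<in>{1..n}. mu edges 1 v * profile a b v) = real (eta * (k - 1)) * b"
proof -
  have "(\<Sum>v\<in>leaves. mu edges 1 v * profile a b v) = (\<Sum>v\<in>leaves. b)"
  proof (intro sum.cong refl)
    fix v assume "v \<in> leaves"
    then show "mu edges 1 v * profile a b v = b" unfolding mu_center_leaf[OF \<open>v \<in> leaves\<close>]
      by (simp add: profile_def)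
  qed
  also have "\<dots> = real (eta * (k - 1)) * b" unfolding sum_constant card_leaves ..
  finally show ?thesis unfolding vertices_eq by (simp add: mu_def)
qed

lemma shadow_grad_leaf:
  assumes u: "u \<in> leaves"
  shows "(\<Sum>v\<in>{1..n}. mu edges u v * profile a b v) = a + (real k - 2) * b"
proof -
  obtain j where j: "j \<in> {1..eta}" "u \<in> petal k j" using u by (rule leaf_in_petal)
  have "(\<Sum>v\<in>leaves. mu edges u v * profile a b v) = (\<Sum>v\<in>leaves. if v \<in> petal k j - {u} then b else 0)"
  proof (intro sum.cong refl)
    fix v assume v: "v \<in> leaves"
    show "mu edges u v * profile a b v = (if v \<in> petal k j - {u} then b else 0)"
    proof (cases "v = u")
      case False
      then show ?thesis using v mu_leaf_leaf[OF j v False] by (simp add: profile_def)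
    qed (simp add: mu_def)
  qed
  also have "\<dots> = (\<Sum>v\<in>petal k j - {u}. b)"
  proof -
    have "petal k j - {u} \<subseteq> leaves" using petal_subset_leaves[OF j(1)] by blast
    then show ?thesis using sum.inter_restrict[of leaves "\<lambda>_. b" "petal k j - {u}"]
      by (simp add: Int_absorb1)
  qed
  also have "\<dots> = (real k - 2) * b"
    using card_petal j k_ge_3 by (simp add: of_nat_diff)
  finally have "(\<Sum>v\<in>leaves. mu edges u v * profile a b v) = (real k - 2) * b" .
  moreover have "mu edges u 1 = 1" using mu_center_leaf[OF u] mu_sym by metis
  ultimately show ?thesis unfolding vertices_eq by (simp add: profile_def)
qed

text \<open>With center value \<open>a\<close> and leaf value \<open>b\<close>, the eigenequations read
  \<open>lam * a ^ (k - 1) = eta * b ^ (k - 1)\<close> and \<open>lam * b = a\<close>, so \<open>lam ^ k = eta\<close>; the normalisation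
  \<open>a ^ k + eta * (k - 1) * b ^ k = 1\<close> then gives \<open>a ^ k = 1 / k\<close>.\<close>
definition hyper_eigval :: real where "hyper_eigval = root k (real eta)"
definition hyper_center :: real where "hyper_center = root k (1 / real k)"
definition hyper_leaf :: real where "hyper_leaf = root k (1 / (real k * real eta))"

lemma hyper_eigval_mult_leaf: "hyper_eigval * hyper_leaf = hyper_center"
  unfolding hyper_eigval_def hyper_leaf_def hyper_center_def using k_ge_3 eta_ge_1
  by (simp add: real_root_mult[symmetric])

lemma hyper_star_eigenpair: "H.eigenpair hyper_eigval (profile hyper_center hyper_leaf)"
proof -
  let ?a = hyper_center and ?b = hyper_leaf and ?lam = hyper_eigval
  have k: "k > 0" using k_ge_3 by simp
  have pos: "?a > 0" "?b > 0" unfolding hyper_center_def hyper_leaf_def using k eta_ge_1 by auto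
  have pow: "?a ^ k = 1 / real k" "?b ^ k = 1 / (real k * real eta)" "?lam ^ k = real eta"
    unfolding hyper_center_def hyper_leaf_def hyper_eigval_def using k by auto
  have normalised: "?a ^ k + real (eta * (k - 1)) * ?b ^ k = 1"
    unfolding pow using k_ge_3 eta_ge_1 by (simp add: of_nat_diff field_simps)
  have center_eq: "?lam * ?a ^ (k - 1) = real eta * ?b ^ (k - 1)"
  proof -
    have "?lam * ?a ^ (k - 1) = (?lam * ?lam ^ (k - 1)) * ?b ^ (k - 1)"
      unfolding hyper_eigval_mult_leaf[symmetric] power_mult_distrib by (simp only: ac_simps)
    also have "?lam * ?lam ^ (k - 1) = real eta" using H.power_k_eq pow(3) by simp
    finally show ?thesis .
  qed
  have leaf_eq: "?lam * ?b ^ (k - 1) = ?a * ?b ^ (k - 2)"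
  proof -
    have "Suc (k - 2) = k - 1" using k_ge_3 by simp
    then have "?b ^ (k - 1) = ?b * ?b ^ (k - 2)" by (metis power_Suc)
    then show ?thesis by (simp only: hyper_eigval_mult_leaf[symmetric] ac_simps)
  qed
  show ?thesis
    unfolding H.eigenpair_def sum_profile_power
  proof (intro conjI ballI allI impI normalised)
    fix i assume i: "i \<in> {1..n}"
    show "profile ?a ?b i > 0" by (rule profile_pos[OF pos i])
    show "?lam * profile ?a ?b i ^ (k - 1) = H.grad i (profile ?a ?b)"
    proof (cases "i = 1")
      case False
      then have "i \<in> leaves" using i vertices_eq by auto
      then show ?thesis using False leaf_eq
        unfolding hyper_grad_leaf[OF \<open>i \<in> leaves\<close>] by (simp add: profile_def)
    qed (use center_eq hyper_grad_center in \<open>simp add: profile_def\<close>)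
  qed (use profile_outside in auto)
qed

lemma hpev_star_center: "hpev n k edges 1 ^ k = 1 / real k"
proof -
  have "hpev n k edges = profile hyper_center hyper_leaf"
    using hpev_eigenpair_iff[OF kuniform_star _ hconnected_star] hyper_star_eigenpair k_ge_3 by simp
  then show ?thesis unfolding hyper_center_def profile_def using k_ge_3 by simp
qed

text \<open>For the shadow, with center value \<open>c = r * d\<close> and leaf value \<open>d\<close>, the eigenequations read
  \<open>lam * r = eta * (k - 1)\<close> and \<open>lam = r + k - 2\<close>; \<open>r\<close> is the positive root of the resulting
  quadratic, whose discriminant is \<open>windmill_disc k eta ^ 2\<close>.\<close>
definition shadow_ratio :: real where
  "shadow_ratio = (windmill_disc k eta - (real k - 2)) / 2"
definition shadow_leaf :: real where
  "shadow_leaf = 1 / sqrt (shadow_ratio ^ 2 + real (eta * (k - 1)))"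

lemma num_leaves_pos: "real (eta * (k - 1)) > 0"
  using k_ge_3 eta_ge_1 by simp

lemma windmill_disc_gt: "windmill_disc k eta > real k - 2"
  unfolding windmill_disc_def using k_ge_3 eta_ge_1 by (intro real_less_rsqrt) simp

lemma shadow_ratio_pos: "shadow_ratio > 0"
  unfolding shadow_ratio_def using windmill_disc_gt by simp

lemma shadow_ratio_quadratic: "(shadow_ratio + real k - 2) * shadow_ratio = real (eta * (k - 1))"
proof -
  have "(windmill_disc k eta) ^ 2 = (real k - 2) ^ 2 + 4 * (real eta * (real k - 1))"
    unfolding windmill_disc_def using k_ge_3 by simp
  then show ?thesis unfolding shadow_ratio_def using k_ge_3
    by (simp add: field_simps power2_eq_square of_nat_diff)
qed

lemma shadow_denominator_pos: "shadow_ratio ^ 2 + real (eta * (k - 1)) > 0"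
  using add_nonneg_pos[OF zero_le_power2 num_leaves_pos] .

lemma shadow_leaf_pos: "shadow_leaf > 0"
  unfolding shadow_leaf_def using shadow_denominator_pos by simp

lemma shadow_leaf_sq: "shadow_leaf ^ 2 = 1 / (shadow_ratio ^ 2 + real (eta * (k - 1)))"
  unfolding shadow_leaf_def using shadow_denominator_pos by (simp add: power_divide)

lemma shadow_star_eigenpair:
  "shadow_eigenpair n edges (shadow_ratio + real k - 2) (profile (shadow_ratio * shadow_leaf) shadow_leaf)"
proof -
  interpret S: uniform_weighted_hypergraph "{1..n}" "shadow_pairs n" pair_vertices "shadow_weight edges" 2
    by (rule shadow_hypergraph)
  let ?r = shadow_ratio and ?d = shadow_leaf
  let ?x = "profile (?r * ?d) ?d" and ?lam = "?r + real k - 2"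
  show ?thesis unfolding S.eigenpair_def sum_profile_power
  proof (intro conjI ballI allI impI)
    fix i assume i: "i \<in> {1..n}"
    show "?x i > 0" using profile_pos[OF _ shadow_leaf_pos i] shadow_ratio_pos shadow_leaf_pos by simp
    show "?lam * ?x i ^ (2 - 1) = S.grad i ?x"
    proof (cases "i = 1")
      case True
      then show ?thesis using shadow_grad_center shadow_ratio_quadratic
        unfolding shadow_grad[OF i] by (simp add: profile_def mult.assoc[symmetric])
    next
      case False
      then have "i \<in> leaves" using i vertices_eq by auto
      then show ?thesis using False unfolding shadow_grad[OF i] shadow_grad_leaf[OF \<open>i \<in> leaves\<close>]
        by (simp add: profile_def algebra_simps)
    qed
  next
    show "(?r * ?d) ^ 2 + real (eta * (k - 1)) * ?d ^ 2 = 1"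
      using shadow_leaf_sq shadow_denominator_pos by (simp add: power_mult_distrib field_simps)
  qed (use profile_outside in auto)
qed

lemma spev_star_center: "spev n edges 1 ^ 2 = 1 / 2 - (real k - 2) / (2 * windmill_disc k eta)"
proof -
  let ?r = shadow_ratio and ?s = "windmill_disc k eta"
  have "spev n edges = profile (?r * shadow_leaf) shadow_leaf"
    using spev_eigenpair_iff[OF kuniform_star hconnected_star] shadow_star_eigenpair by simp
  then have "spev n edges 1 ^ 2 = ?r ^ 2 / (?r ^ 2 + real (eta * (k - 1)))"
    using shadow_leaf_sq by (simp add: profile_def power_mult_distrib)
  also have "?r ^ 2 + real (eta * (k - 1)) = ?r * ?s"
  proof -
    have s: "?s = 2 * ?r + (real k - 2)" unfolding shadow_ratio_def by (simp add: field_simps)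
    show ?thesis unfolding s shadow_ratio_quadratic[symmetric] by (simp add: algebra_simps power2_eq_square)
  qed
  also have "?r ^ 2 / (?r * ?s) = ?r / ?s"
    using shadow_ratio_pos by (simp add: power2_eq_square)
  also have "\<dots> = 1 / 2 - (real k - 2) / (2 * ?s)"
    using windmill_disc_gt k_ge_3 unfolding shadow_ratio_def by (simp add: field_simps)
  finally show ?thesis .
qed

end

lemma windmill_disc_tendsto:
  assumes "k \<ge> 3"
  shows "(\<lambda>eta. (real k - 2) / (2 * windmill_disc k eta)) \<longlonglongrightarrow> 0"
proof (rule tendsto_divide_0[OF tendsto_const])
  have "sqrt (real eta) \<le> 2 * windmill_disc k eta" for eta
  proof -
    have "real eta * 1 \<le> real eta * (4 * (real k - 1))"
      using assms by (intro mult_left_mono) auto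
    then have le: "real eta \<le> (real k - 2) ^ 2 + 4 * (real eta * (real k - 1))"
      using zero_le_power2[of "real k - 2"] by linarith
    then have "sqrt (real eta) \<le> windmill_disc k eta"
      unfolding windmill_disc_def by (rule real_sqrt_le_mono)
    moreover have "windmill_disc k eta \<ge> 0" unfolding windmill_disc_def using le by simp
    ultimately show ?thesis by simp
  qed
  moreover have "filterlim (\<lambda>eta. sqrt (real eta)) at_top sequentially"
    by (rule filterlim_compose[OF sqrt_at_top filterlim_real_sequentially])
  ultimately have "filterlim (\<lambda>eta. 2 * windmill_disc k eta) at_top sequentially"
    by (auto intro: filterlim_at_top_mono)
  then show "filterlim (\<lambda>eta. 2 * windmill_disc k eta) at_infinity sequentially"
    by (rule filterlim_at_top_imp_at_infinity)
qed

lemma eigenvector_gap_le_1: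
  assumes "kuniform n k E" "hconnected n E" "k \<ge> 2"
  shows "Max ((\<lambda>v. \<bar>hpev n k E v ^ k - spev n E v ^ 2\<bar>) ` {1..n}) \<le> 1"
proof -
  interpret H: uniform_weighted_hypergraph "{1..n}" E "\<lambda>e. e" "\<lambda>_. 1" k
    by (rule kuniform_hypergraph[OF assms(1,3)])
  interpret S: uniform_weighted_hypergraph "{1..n}" "shadow_pairs n" pair_vertices "shadow_weight E" 2
    by (rule shadow_hypergraph)
  have y: "H.eigenpair (hrho n k E) (hpev n k E)" using hpev_eigenpair_iff[OF assms(1,3,2)] by simp
  have x: "S.eigenpair (shadow_lambda n E) (spev n E)" using spev_eigenpair_iff[OF assms(1,2)] by simp
  have "\<bar>hpev n k E v ^ k - spev n E v ^ 2\<bar> \<le> 1" if v: "v \<in> {1..n}" for v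
  proof -
    have "hpev n k E v > 0" using y v unfolding H.eigenpair_def by auto
    moreover have "\<bar>hpev n k E v\<bar> ^ k \<le> 1" using H.abs_le_knorm[OF v, of "hpev n k E"] H.eigenpair_knorm[OF y] by simp
    ultimately have "0 \<le> hpev n k E v ^ k" "hpev n k E v ^ k \<le> 1" by simp_all
    moreover have "spev n E v ^ 2 \<le> 1"
      using S.abs_le_knorm[OF v, of "spev n E"] S.eigenpair_knorm[OF x] by simp
    ultimately show ?thesis using zero_le_power2[of "spev n E v"] by linarith
  qed
  moreover have "n \<ge> 1" using assms(2) unfolding hconnected_def by simp
  ultimately show ?thesis by (subst Max_le_iff) auto
qed

lemma spev_star_center_tendsto:
  assumes "k \<ge> 3"
  shows "(\<lambda>eta. spev (star_n eta k) (star_edges eta k) 1 ^ 2) \<longlonglongrightarrow> 1 / 2"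
proof (rule Lim_transform_eventually)
  show "(\<lambda>eta. 1 / 2 - (real k - 2) / (2 * windmill_disc k eta)) \<longlonglongrightarrow> 1 / 2"
    using tendsto_diff[OF tendsto_const windmill_disc_tendsto[OF assms], of "1 / 2"] by simp
  show "\<forall>\<^sub>F eta in sequentially.
      1 / 2 - (real k - 2) / (2 * windmill_disc k eta) = spev (star_n eta k) (star_edges eta k) 1 ^ 2"
    using eventually_ge_at_top[of 1]
    by (rule eventually_mono) (use hyperstar.spev_star_center assms in \<open>simp add: hyperstar_def\<close>)
qed

lemma star_center_gap_le_Delta:
  assumes "k \<ge> 3" "eta \<ge> 1"
  shows "\<bar>1 / real k - spev (star_n eta k) (star_edges eta k) 1 ^ 2\<bar> \<le> Delta k"
proof -
  interpret hyperstar k eta using assms by unfold_locales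
  let ?gap = "\<lambda>(n, E). Max ((\<lambda>v. \<bar>hpev n k E v ^ k - spev n E v ^ 2\<bar>) ` {1..n})"
  let ?H = "{(n, E). kuniform n k E \<and> hconnected n E}"
  have "\<bar>1 / real k - spev n edges 1 ^ 2\<bar> \<le> ?gap (n, edges)"
    using hpev_star_center n_eq by (auto intro!: Max_ge[THEN order_trans[rotated]])
  also have "\<dots> \<le> Sup (?gap ` ?H)"
  proof (rule cSup_upper)
    show "?gap (n, edges) \<in> ?gap ` ?H" using kuniform_star hconnected_star by force
    show "bdd_above (?gap ` ?H)" using eigenvector_gap_le_1 assms by (intro bdd_aboveI[of _ 1]) auto
  qed
  finally show ?thesis unfolding Delta_def .
qed

theorem mainTheorem7:
  fixes k :: nat
  assumes "k \<ge> 3"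
  shows "(\<forall>eta \<ge> 1. hpev (star_n eta k) k (star_edges eta k) 1 ^ k = 1 / real k)
       \<and> (\<lambda>eta. spev (star_n eta k) (star_edges eta k) 1 ^ 2) \<longlonglongrightarrow> 1 / 2
       \<and> Delta k \<ge> 1 / 2 - 1 / real k"
proof -
  let ?x1 = "\<lambda>eta. spev (star_n eta k) (star_edges eta k) 1 ^ 2"
  have hyper: "\<forall>eta \<ge> 1. hpev (star_n eta k) k (star_edges eta k) 1 ^ k = 1 / real k"
    using hyperstar.hpev_star_center assms by (simp add: hyperstar_def)
  have lim: "?x1 \<longlonglongrightarrow> 1 / 2" by (rule spev_star_center_tendsto[OF assms])
  then have "(\<lambda>eta. \<bar>1 / real k - ?x1 eta\<bar>) \<longlonglongrightarrow> \<bar>1 / real k - 1 / 2\<bar>"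
    by (intro tendsto_intros)
  then have "\<bar>1 / real k - 1 / 2\<bar> \<le> Delta k"
    using star_center_gap_le_Delta[OF assms] by (intro LIMSEQ_le_const2) auto
  then show ?thesis using hyper lim assms by (simp add: field_simps split: abs_split)
qed

end
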